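(* Let $Q$ be a square-free word of length $n\geq 2$. Then for every position $p\in\{1,\dots,n\}$, the number of factors of $Q$ that are almost-squares and start at the $p$-th letter of $Q$ is less than $2\log_{5/4} n$.
   Context: Words are finite sequences of letters. A factor of $Q$ is a contiguous subword; factors starting at the same position are distinguished by their lengths. An extension of a word $W$ over an alphabet $\mathbb{A}$ is a word $W_1xW_2$ with $W=W_1W_2$ ($W_1,W_2$ possibly empty) and $x\in\mathbb{A}$. An almost-square is a word of the form $WW'$ where $W'$ is either an extension of $W$ or is obtained by deleting one letter from $W$. A square is a nonempty word of the form $YY$; a word is square-free if none of its factors is a square. *)

theory Defs
  imports Complex_Main
begin

definition is_factor :: "'a list \<Rightarrow> 'a list \<Rightarrow> bool" where
  "is_factor F Q \<longleftrightarrow> (\<exists>u v. Q = u @ F @ v)"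

definition square_free :: "'a list \<Rightarrow> bool" where
  "square_free Q \<longleftrightarrow> \<not> (\<exists>Y. Y \<noteq> [] \<and> is_factor (Y @ Y) Q)"

definition is_extension :: "'a list \<Rightarrow> 'a list \<Rightarrow> bool" where
  "is_extension V W \<longleftrightarrow> (\<exists>W1 W2 x. W = W1 @ W2 \<and> V = W1 @ [x] @ W2)"

definition almost_square :: "'a list \<Rightarrow> bool" where
  "almost_square U \<longleftrightarrow> (\<exists>W W'. U = W @ W' \<and>
      (is_extension W' W \<or> is_extension W W'))"

text \<open>Number of almost-square factors of Q starting at (1-based) position p;
  factors starting at p are identified by their length l.\<close>
definition almost_square_count :: "'a list \<Rightarrow> nat \<Rightarrow> nat" where
  "almost_square_count Q p =
     card {l. p - 1 + l \<le> length Q \<and> almost_square (take l (drop (p - 1) Q))}"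

end

theory Submission
  imports Defs
begin

(* An almost-square prefix of length 2m+1 of a word w forces w to agree with its shift by m or
   m + 1 on two complementary blocks of [0, m).  For two such prefixes with half-lengths m + 2 <= M,
   the blocks of the shorter and of the longer one overlap in three intervals covering [0, m) up to
   a bounded number of positions; on each overlap w agrees with two different shifts, so
   square-freeness bounds its length by the difference of the shifts, about M - m.  This gives
   4m <= 3M, so among the half-lengths of almost-squares starting at a fixed position every
   second one grows by a factor of at least 5/4, while all of them are below n/2. *)

lemma square_free_drop: "square_free w \<Longrightarrow> square_free (drop k w)"
  unfolding square_free_def is_factor_def
  by (metis append.assoc append_take_drop_id)

lemma square_free_nth_mismatch:
  assumes sf: "square_free w" and "0 < d" and "x + 2*d \<le> length w"
  shows "\<exists>j<d. w!(x+j) \<noteq> w!(x+d+j)"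
proof (rule ccontr)
  assume "\<not> ?thesis"
  then have eq: "w!(x+j) = w!(x+d+j)" if "j < d" for j
    using that by blast
  define Y where "Y = take d (drop x w)"
  have "take (2*d) (drop x w) = Y @ Y"
  proof (rule nth_equalityI)
    fix j assume "j < length (take (2*d) (drop x w))"
    then show "take (2*d) (drop x w) ! j = (Y @ Y) ! j"
      using assms eq[of "j - d"] by (auto simp: Y_def nth_append)
  qed (use assms in \<open>simp add: Y_def\<close>)
  then have "w = take x w @ (Y @ Y) @ drop (2*d) (drop x w)"
    by (metis append_take_drop_id)
  moreover have "Y \<noteq> []"
    using assms by (simp add: Y_def)
  ultimately show False
    using sf unfolding square_free_def is_factor_def by blast
qed

lemma square_free_shift_overlap:
  assumes sf: "square_free w" and "s < t" and "hi + t \<le> length w"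
    and "\<forall>i\<in>{lo..<hi}. w!i = w!(i+s)" and "\<forall>i\<in>{lo..<hi}. w!i = w!(i+t)"
  shows "hi + s < lo + t"
proof (rule ccontr)
  assume long: "\<not> hi + s < lo + t"
  have "w!(lo+s+j) = w!(lo+s+(t-s)+j)" if "j < t - s" for j
  proof -
    have "lo + j \<in> {lo..<hi}" using that long by simp
    then have "w!(lo+j+s) = w!(lo+j+t)" using assms(4,5) by metis
    then show ?thesis using \<open>s < t\<close> by (simp add: ac_simps)
  qed
  moreover have "lo + s + 2*(t - s) \<le> length w"
    using assms(2,3) long by linarith
  ultimately show False
    using square_free_nth_mismatch[OF sf, of "t - s" "lo + s"] \<open>s < t\<close> by auto
qed

(* The first 2m + 1 letters of w are W1 W2 W1 x W2 (e = 0) or W1 x W2 W1 W2 (e = 1), where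
   a = |W1|; only the coincidences between the two copies of W1 and of W2 are recorded. *)
definition almost_square_prefix :: "'a list \<Rightarrow> nat \<Rightarrow> nat \<Rightarrow> nat \<Rightarrow> bool" where
  "almost_square_prefix w m a e \<longleftrightarrow> 2*m + 1 \<le> length w \<and> a \<le> m \<and> e \<le> 1 \<and>
     (\<forall>i\<in>{0..<a}. w!i = w!(i + (m + e))) \<and> (\<forall>i\<in>{a+e..<m+e}. w!i = w!(i + (m + 1 - e)))"

lemma nth_repeated_factor:
  assumes "w = p @ u @ q @ u @ r" and "i < length u"
  shows "w ! (length p + i) = w ! (length p + i + length (u @ q))"
proof -
  have "w ! (length p + i + length (u @ q)) = ((p @ u @ q) @ u @ r) ! (length (p @ u @ q) + i)"
    using assms(1) by (simp add: ac_simps)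
  also have "\<dots> = u ! i"
    using assms(2) by (simp only: nth_append_length_plus nth_append) simp
  finally show ?thesis
    using assms by (simp add: nth_append)
qed

lemma almost_square_prefix_extension_right:
  "almost_square_prefix (W1 @ W2 @ W1 @ [x] @ W2 @ z) (length W1 + length W2) (length W1) 0"
  (is "almost_square_prefix ?w _ _ _")
  unfolding almost_square_prefix_def
proof (intro conjI ballI)
  fix i assume "i \<in> {0..<length W1}"
  then show "?w ! i = ?w ! (i + (length W1 + length W2 + 0))"
    using nth_repeated_factor[of ?w "[]" W1 W2 "[x] @ W2 @ z" i] by simp
next
  fix i assume "i \<in> {length W1 + 0..<length W1 + length W2 + 0}"
  then obtain j where "i = length W1 + j" "j < length W2"
    by (intro that[of "i - length W1"]) auto
  then show "?w ! i = ?w ! (i + (length W1 + length W2 + 1 - 0))"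
    using nth_repeated_factor[of ?w W1 W2 "W1 @ [x]" z j] by (simp add: ac_simps)
qed simp_all

lemma almost_square_prefix_extension_left:
  "almost_square_prefix (W1 @ [x] @ W2 @ W1 @ W2 @ z) (length W1 + length W2) (length W1) 1"
  (is "almost_square_prefix ?w _ _ _")
  unfolding almost_square_prefix_def
proof (intro conjI ballI)
  fix i assume "i \<in> {0..<length W1}"
  then show "?w ! i = ?w ! (i + (length W1 + length W2 + 1))"
    using nth_repeated_factor[of ?w "[]" W1 "[x] @ W2" "W2 @ z" i] by (simp add: ac_simps)
next
  fix i assume "i \<in> {length W1 + 1..<length W1 + length W2 + 1}"
  then obtain j where "i = length W1 + 1 + j" "j < length W2"
    by (intro that[of "i - length W1 - 1"]) auto
  then show "?w ! i = ?w ! (i + (length W1 + length W2 + 1 - 1))"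
    using nth_repeated_factor[of ?w "W1 @ [x]" W2 W1 z j] by (simp add: ac_simps)
qed simp_all

lemma almost_square_imp_almost_square_prefix:
  assumes "almost_square U"
  shows "\<exists>m a e. length U = 2*m + 1 \<and> almost_square_prefix (U @ z) m a e"
proof -
  obtain W W' where U: "U = W @ W'" and "is_extension W' W \<or> is_extension W W'"
    using assms unfolding almost_square_def by blast
  then consider W1 W2 x where "U = W1 @ W2 @ W1 @ [x] @ W2"
    | W1 W2 x where "U = W1 @ [x] @ W2 @ W1 @ W2"
    unfolding is_extension_def by auto
  then show ?thesis
  proof cases
    case 1
    then have "length U = 2*(length W1 + length W2) + 1" "U @ z = W1 @ W2 @ W1 @ [x] @ W2 @ z"
      by simp_all
    then show ?thesis
      using almost_square_prefix_extension_right by metis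
  next
    case 2
    then have "length U = 2*(length W1 + length W2) + 1" "U @ z = W1 @ [x] @ W2 @ W1 @ W2 @ z"
      by simp_all
    then show ?thesis
      using almost_square_prefix_extension_left by metis
  qed
qed

lemma almost_square_prefixes_growth:
  assumes sf: "square_free w"
    and u: "almost_square_prefix w m a e" and v: "almost_square_prefix w M b f"
    and mM: "m + 2 \<le> M"
  shows "4*m \<le> 3*M"
proof -
  have len: "2*M + 1 \<le> length w" and ae: "a \<le> m" "e \<le> 1" and bf: "b \<le> M" "f \<le> 1"
    using u v unfolding almost_square_prefix_def by auto
  have u_head: "\<forall>i\<in>{0..<a}. w!i = w!(i + (m + e))"
    and u_tail: "\<forall>i\<in>{a+e..<m+e}. w!i = w!(i + (m + 1 - e))"
    and v_head: "\<forall>i\<in>{0..<b}. w!i = w!(i + (M + f))"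
    and v_tail: "\<forall>i\<in>{b+f..<M+f}. w!i = w!(i + (M + 1 - f))"
    using u v unfolding almost_square_prefix_def by auto
  have overlap: "hi + s < lo + t"
    if "\<forall>i\<in>A. w!i = w!(i+s)" "\<forall>i\<in>B. w!i = w!(i+t)" "{lo..<hi} \<subseteq> A" "{lo..<hi} \<subseteq> B"
      "s < t" "hi \<le> m + 1" "t \<le> M + 1" for A B lo hi s t
  proof (rule square_free_shift_overlap[OF sf \<open>s < t\<close>])
    show "hi + t \<le> length w" using that len mM by linarith
  qed (use that in blast)+
  (* "0 +" keeps the shape "hi + s < lo + t" needed to apply overlap as a rule *)
  have head_head: "min a b + (m + e) < 0 + (M + f)"
    by (rule overlap[OF u_head v_head]) (use ae bf mM in auto)
  have tail_head: "min b m + (m + 1 - e) < a + e + (M + f)" if "a \<le> b"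
    by (rule overlap[OF u_tail v_head]) (use ae bf mM in auto)
  have head_tail: "a + (m + e) < b + f + (M + 1 - f)" if "b < a"
    by (rule overlap[OF u_head v_tail]) (use ae bf mM that in auto)
  have tail_tail: "m + (m + 1 - e) < max (a + e) (b + f) + (M + 1 - f)"
    by (rule overlap[OF u_tail v_tail]) (use ae bf mM in auto)
  show ?thesis
  proof (cases "a \<le> b")
    case True
    then show ?thesis
      using head_head tail_head[OF True] tail_tail ae bf mM
      by (simp only: min_def max_def split: if_splits; linarith)
  next
    case False
    then show ?thesis
      using head_head head_tail tail_tail ae bf mM
      by (simp only: min_def max_def not_le split: if_splits; linarith)
  qed
qed

lemma Max_remove_Max:
  fixes H :: "'a::linorder set"
  assumes "finite H" and "2 \<le> card H"
  shows "Max (H - {Max H}) < Max H" and "Max (H - {Max H}) \<in> H" and "card (H - {Max H}) = card H - 1"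
proof -
  have "Max H \<in> H"
    using assms by (intro Max_in) auto
  then show card: "card (H - {Max H}) = card H - 1"
    using assms(1) by simp
  then have "H - {Max H} \<noteq> {}"
    using assms(2) by (intro notI) simp
  then have "Max (H - {Max H}) \<in> H - {Max H}"
    using assms(1) by (intro Max_in) auto
  then show "Max (H - {Max H}) \<in> H" and "Max (H - {Max H}) < Max H"
    using assms(1) by (auto intro: le_neq_trans)
qed

lemma remove_two_largest:
  fixes H :: "nat set"
  assumes "finite H" and "2 \<le> card H"
  obtains H' where "H' \<subseteq> H" and "card H = Suc (Suc (card H'))" and "\<forall>x\<in>H'. x + 2 \<le> Max H"
proof -
  define y' where "y' = Max (H - {Max H})"
  have y': "y' < Max H" "y' \<in> H" "card (H - {Max H}) = card H - 1"
    using Max_remove_Max[OF assms] unfolding y'_def by simp_all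
  have "card (H - {Max H} - {y'}) = card H - 2"
    using y' assms by simp
  then have "card H = Suc (Suc (card (H - {Max H} - {y'})))"
    using assms(2) by simp
  moreover have "x + 2 \<le> Max H" if "x \<in> H - {Max H} - {y'}" for x
  proof -
    have "x \<le> y'"
      using that assms(1) unfolding y'_def by (intro Max_ge) auto
    then show ?thesis
      using that y'(1) by auto
  qed
  ultimately show thesis
    using that[of "H - {Max H} - {y'}"] by blast
qed

lemma two_step_growth_card_bound:
  fixes H :: "nat set"
  assumes "finite H" and "2 \<le> card H"
    and "\<forall>x\<in>H. \<forall>y\<in>H. x + 2 \<le> y \<longrightarrow> 5*x \<le> 4*y"
  shows "5 ^ card H \<le> 4 ^ Suc (card H) * (Max H)^2"
  using assms
proof (induction "card H" arbitrary: H rule: less_induct)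
  case less
  show ?case
  proof (cases "card H \<le> 3")
    case True
    consider "card H = 2" | "card H = 3"
      using True less.prems(2) by linarith
    then have "5 ^ card H \<le> 4 ^ Suc (card H) * (card H - 1)^2"
      by cases simp_all
    also have "\<dots> \<le> 4 ^ Suc (card H) * (Max H)^2"
      using card_le_Suc_Max[OF less.prems(1)] by (simp add: power_mono)
    finally show ?thesis .
  next
    case False
    obtain H' where H': "H' \<subseteq> H" "card H = Suc (Suc (card H'))" "\<forall>x\<in>H'. x + 2 \<le> Max H"
      using remove_two_largest[OF less.prems(1,2)] by blast
    have "finite H'"
      using H'(1) less.prems(1) by (rule finite_subset)
    have "2 \<le> card H'"
      using H'(2) False by simp
    have "Max H' \<in> H'" "Max H \<in> H"
      using \<open>finite H'\<close> \<open>2 \<le> card H'\<close> less.prems(1,2) by (auto intro!: Max_in)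
    then have xy: "5 * Max H' \<le> 4 * Max H"
      using less.prems(3) H'(1,3) by (meson subsetD)
    have IH: "5 ^ card H' \<le> 4 ^ Suc (card H') * (Max H')^2"
      using less.hyps[of H'] H'(1,2) less.prems(3) \<open>finite H'\<close> \<open>2 \<le> card H'\<close> by auto
    have "(5::nat) ^ card H = 25 * 5 ^ card H'"
      by (simp add: H'(2))
    also have "\<dots> \<le> 25 * (4 ^ Suc (card H') * (Max H')^2)"
      using IH by (rule mult_le_mono2)
    also have "\<dots> = 4 ^ Suc (card H') * (5 * Max H')^2"
      by (simp add: power_mult_distrib)
    also have "\<dots> \<le> 4 ^ Suc (card H') * (4 * Max H)^2"
      using power_mono[OF xy, of 2] by simp
    also have "\<dots> = 4 ^ Suc (card H) * (Max H)^2"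
      by (simp add: H'(2) power_mult_distrib)
    finally show ?thesis .
  qed
qed

lemma two_step_growth_card_bound_strict:
  fixes H :: "nat set"
  assumes "finite H" and growth: "\<forall>x\<in>H. \<forall>y\<in>H. x + 2 \<le> y \<longrightarrow> 5*x \<le> 4*y"
    and small: "\<forall>x\<in>H. 2*x < N" and "2 \<le> N"
  shows "5 ^ card H < 4 ^ card H * N^2"
proof (cases "2 \<le> card H")
  case True
  then have "H \<noteq> {}"
    by auto
  then have "2 * Max H < N"
    using small assms(1) by simp
  then have "(2 * Max H)^2 < N^2"
    using power_strict_mono[of "2 * Max H" N 2] by simp
  moreover have "5 ^ card H \<le> 4 ^ card H * (2 * Max H)^2"
    using two_step_growth_card_bound[OF assms(1) True growth] by (simp add: power_mult_distrib)
  ultimately show ?thesis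
    by (meson le_less_trans mult_less_mono2 zero_less_power zero_less_numeral)
next
  case False
  have "4 \<le> N^2"
    using power_mono[OF \<open>2 \<le> N\<close>, of 2] by simp
  consider "card H = 0" | "card H = 1"
    using False by linarith
  then show ?thesis
    using \<open>4 \<le> N^2\<close> by cases simp_all
qed

lemma less_two_log_of_power_bound:
  fixes k n :: nat
  assumes "5 ^ k < 4 ^ k * n^2"
  shows "real k < 2 * log (5/4) (real n)"
proof -
  have "real (5 ^ k) < real (4 ^ k * n^2)"
    using assms by linarith
  then have "(5/4::real) ^ k < real n ^ 2"
    by (simp add: power_divide divide_less_eq mult.commute)
  then have "real k < log (5/4) (real n ^ 2)"
    by (rule less_log_of_power) simp
  then show ?thesis
    by (simp add: log_nat_power)
qed

definition almost_square_half_lengths :: "'a list \<Rightarrow> nat set" where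
  "almost_square_half_lengths w = {m. \<exists>a e. almost_square_prefix w m a e}"

lemma almost_square_half_lengths_less:
  "m \<in> almost_square_half_lengths w \<Longrightarrow> 2*m < length w"
  by (auto simp: almost_square_half_lengths_def almost_square_prefix_def)

lemma finite_almost_square_half_lengths: "finite (almost_square_half_lengths w)"
  by (rule finite_subset[of _ "{..length w}"]) (auto dest: almost_square_half_lengths_less)

lemma almost_square_half_lengths_growth:
  assumes "square_free w"
  shows "\<forall>x\<in>almost_square_half_lengths w. \<forall>y\<in>almost_square_half_lengths w.
           x + 2 \<le> y \<longrightarrow> 5*x \<le> 4*y"
proof (intro ballI impI)
  fix x y
  assume "x \<in> almost_square_half_lengths w" "y \<in> almost_square_half_lengths w" "x + 2 \<le> y"
  then have "4*x \<le> 3*y"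
    unfolding almost_square_half_lengths_def using almost_square_prefixes_growth[OF assms] by blast
  then show "5*x \<le> 4*y"
    using \<open>x + 2 \<le> y\<close> by linarith
qed

lemma almost_square_count_le_card_half_lengths:
  "almost_square_count Q p \<le> card (almost_square_half_lengths (drop (p - 1) Q))"
proof -
  let ?w = "drop (p - 1) Q" and ?H = "almost_square_half_lengths (drop (p - 1) Q)"
  have "{l. p - 1 + l \<le> length Q \<and> almost_square (take l ?w)} \<subseteq> (\<lambda>m. 2*m + 1) ` ?H"
  proof
    fix l assume "l \<in> {l. p - 1 + l \<le> length Q \<and> almost_square (take l ?w)}"
    then have "almost_square (take l ?w)" and "l \<le> length ?w"
      by auto
    then obtain m a e where "length (take l ?w) = 2*m + 1" and "almost_square_prefix ?w m a e"
      using almost_square_imp_almost_square_prefix[of "take l ?w" "drop l ?w"]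
      unfolding append_take_drop_id by blast
    moreover have "l = 2*m + 1"
      using \<open>l \<le> length ?w\<close> calculation(1) by simp
    ultimately show "l \<in> (\<lambda>m. 2*m + 1) ` ?H"
      unfolding almost_square_half_lengths_def by blast
  qed
  then have "almost_square_count Q p \<le> card ((\<lambda>m. 2*m + 1) ` ?H)"
    unfolding almost_square_count_def
    by (intro card_mono finite_imageI finite_almost_square_half_lengths)
  also have "\<dots> \<le> card ?H"
    by (rule card_image_le[OF finite_almost_square_half_lengths])
  finally show ?thesis .
qed

theorem mainTheorem6:
  fixes Q :: "'a list" and p :: nat
  assumes "square_free Q" and "length Q \<ge> 2" and "p \<in> {1..length Q}"
  shows "real (almost_square_count Q p) < 2 * log (5/4) (real (length Q))"
proof -
  define H where "H = almost_square_half_lengths (drop (p - 1) Q)"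
  have "square_free (drop (p - 1) Q)"
    using assms(1) by (rule square_free_drop)
  then have growth: "\<forall>x\<in>H. \<forall>y\<in>H. x + 2 \<le> y \<longrightarrow> 5*x \<le> 4*y"
    unfolding H_def by (rule almost_square_half_lengths_growth)
  have short: "\<forall>x\<in>H. 2*x < length Q"
    unfolding H_def by (fastforce dest: almost_square_half_lengths_less)
  have "5 ^ card H < 4 ^ card H * (length Q)^2"
    using two_step_growth_card_bound_strict[OF _ growth short assms(2)]
    unfolding H_def by (simp add: finite_almost_square_half_lengths)
  then have "real (card H) < 2 * log (5/4) (real (length Q))"
    by (rule less_two_log_of_power_bound)
  then show ?thesis
    using almost_square_count_le_card_half_lengths[of Q p] unfolding H_def by linarith
qed

end
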